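(* Let $X$ be a Dedekind complete Riesz space and let $x,y,v,w\in X^{s}_{+}$ with $x\wedge y=0$ and $v\wedge w=0$. Then $$(x+v)\wedge(y+w)=x\wedge w+y\wedge v,$$ and the two summands $x\wedge w$ and $y\wedge v$ are disjoint.
   Context: For a Dedekind complete Riesz space $X$, its sup-completion $X^{s}$ is the set of classes of nonempty upward directed subsets of $X$ under $A\sim B$ iff $\sup_{a\in A}(x\wedge a)=\sup_{b\in B}(x\wedge b)$ for all $x\in X$, with the induced addition, nonnegative scalar multiplication and order; $X\subseteq X^{s}$. It is a lattice-ordered cone in which every nonempty subset has a supremum; $X^s_+=\{x\in X^s:x\ge0\}$; elements $a,b\in X^s_+$ are disjoint if $a\wedge b=0$. *)

theory Defs
  imports Complex_Main
begin

class dc_riesz_space = ordered_real_vector + conditionally_complete_lattice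

definition updir :: "'a::order set \<Rightarrow> bool" where
  "updir A \<longleftrightarrow> A \<noteq> {} \<and> (\<forall>a\<in>A. \<forall>b\<in>A. \<exists>c\<in>A. a \<le> c \<and> b \<le> c)"

definition sc_rel :: "'a::dc_riesz_space set \<Rightarrow> 'a set \<Rightarrow> bool" where
  "sc_rel A B \<longleftrightarrow> (\<forall>x. (SUP a\<in>A. inf x a) = (SUP b\<in>B. inf x b))"

text \<open>The sup-completion: equivalence classes of nonempty upward directed sets.\<close>
typedef (overloaded) 'a supc =
  "{C. \<exists>A. updir A \<and> C = {B. updir B \<and> sc_rel A B}} :: 'a::dc_riesz_space set set set"
proof -
  have "updir {0::'a}" by (simp add: updir_def)
  then show ?thesis by blast
qed

definition sc_class :: "'a::dc_riesz_space set \<Rightarrow> 'a supc" where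
  "sc_class A = Abs_supc {B. updir B \<and> sc_rel A B}"

definition sc_rep :: "'a::dc_riesz_space supc \<Rightarrow> 'a set" where
  "sc_rep c = (SOME A. A \<in> Rep_supc c)"

definition sc_emb :: "'a::dc_riesz_space \<Rightarrow> 'a supc" where
  "sc_emb x = sc_class {x}"

instantiation supc :: (dc_riesz_space) ord
begin
definition less_eq_supc :: "'a supc \<Rightarrow> 'a supc \<Rightarrow> bool" where
  "less_eq_supc c d \<longleftrightarrow>
     (\<forall>x. (SUP a\<in>sc_rep c. inf x a) \<le> (SUP b\<in>sc_rep d. inf x b))"
definition less_supc :: "'a supc \<Rightarrow> 'a supc \<Rightarrow> bool" where
  "less_supc c d \<longleftrightarrow> c \<le> d \<and> \<not> d \<le> c"
instance ..
end

instantiation supc :: (dc_riesz_space) zero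
begin
definition zero_supc :: "'a supc" where "zero_supc = sc_emb 0"
instance ..
end

instantiation supc :: (dc_riesz_space) plus
begin
definition plus_supc :: "'a supc \<Rightarrow> 'a supc \<Rightarrow> 'a supc" where
  "plus_supc c d = sc_class {a + b | a b. a \<in> sc_rep c \<and> b \<in> sc_rep d}"
instance ..
end

instantiation supc :: (dc_riesz_space) inf
begin
definition inf_supc :: "'a supc \<Rightarrow> 'a supc \<Rightarrow> 'a supc" where
  "inf_supc c d = (THE e. e \<le> c \<and> e \<le> d \<and> (\<forall>f. f \<le> c \<and> f \<le> d \<longrightarrow> f \<le> e))"
instance ..
end

end

theory Submission
  imports Defs "HOL-Library.Lattice_Algebras"
begin

text \<open>An element c of the sup-completion is determined by its meets with the elements u of X,
  which are computed from any representative A of c as \<open>\<Squnion>a\<in>A. u \<sqinter> a\<close>.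
  Meets in the sup-completion are computed pointwise in u, and \<open>(c + d) \<sqinter> u\<close> is the supremum
  over s of \<open>u \<sqinter> (c \<sqinter> s + d \<sqinter> s)\<close>, a monotone family in s. Since meets distribute over
  suprema in a lattice-ordered group, and the meet of the suprema of two monotone families is the
  supremum of their pointwise meets, the identity reduces pointwise to the identity
  \<open>(a + c) \<sqinter> (b + d) = a \<sqinter> d + b \<sqinter> c\<close>, valid in every lattice-ordered group whenever
  \<open>a \<sqinter> b = c \<sqinter> d\<close>.\<close>

instance dc_riesz_space \<subseteq> lattice_ab_group_add ..

lemma inf_add_add_le:
  fixes a b c d :: "'a::lattice_ab_group_add"
  shows "inf (a + c) (b + d) + inf a b \<le> a + b + inf c d"
proof -
  have "inf (a + c) (b + d) + inf a b = inf (a + c + inf a b) (b + d + inf a b)"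
    by (rule add_inf_distrib_right)
  also have "\<dots> \<le> inf (a + c + b) (b + d + a)"
    by (intro inf_mono add_left_mono) simp_all
  also have "\<dots> = a + b + inf c d"
    by (simp add: add_inf_distrib_left ac_simps)
  finally show ?thesis .
qed

lemma inf_add_add_eq:
  fixes a b c d :: "'a::lattice_ab_group_add"
  assumes "inf a b = inf c d"
  shows "inf (a + c) (b + d) = inf a d + inf b c"
proof (rule antisym)
  let ?z = "inf (a + c) (b + d)"
  have "?z \<le> a + b" using inf_add_add_le[of a c b d] assms by simp
  moreover have "?z \<le> c + d" using inf_add_add_le[of c a d b] assms by (simp add: ac_simps)
  moreover have "?z \<le> a + c" "?z \<le> b + d" by simp_all
  ultimately have "sup (?z - b) (?z - c) \<le> inf a d"
    by (simp add: diff_le_eq add.commute)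
  then have "?z - inf b c \<le> inf a d"
    by (simp add: diff_inf_eq_sup add_sup_distrib_left)
  then show "?z \<le> inf a d + inf b c"
    by (simp only: diff_le_eq)
  have "inf a d + inf b c \<le> a + c" "inf a d + inf b c \<le> d + b"
    by (intro add_mono inf_le1 inf_le2)+
  then show "inf a d + inf b c \<le> ?z"
    by (simp add: add.commute[of d])
qed

lemma bdd_above_inf_image: "bdd_above ((\<lambda>a. inf (u::'a::semilattice_inf) (f a)) ` A)"
  by (rule bdd_aboveI2[of _ _ u]) simp

lemma inf_cSUP:
  fixes f :: "'b \<Rightarrow> 'a::{conditionally_complete_lattice, lattice_ab_group_add}"
  assumes "I \<noteq> {}" "bdd_above (f ` I)"
  shows "inf y (SUP i\<in>I. f i) = (SUP i\<in>I. inf y (f i))"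
proof (rule antisym)
  let ?S = "SUP i\<in>I. f i" and ?M = "SUP i\<in>I. inf y (f i)"
  \<comment> \<open>Termwise, \<open>f i = y \<sqinter> f i + y \<squnion> f i - y\<close>; taking suprema gives \<open>y + ?S \<le> ?M + y \<squnion> ?S\<close>.\<close>
  have bdd: "bdd_above ((\<lambda>i. inf y (f i)) ` I)"
    by (rule bdd_above_inf_image)
  have "f i \<le> ?M + sup y ?S - y" if "i \<in> I" for i
  proof -
    have "f i = inf y (f i) + sup y (f i) - y"
      using add_eq_inf_sup[of y "f i"] by (simp add: algebra_simps)
    also have "\<dots> \<le> ?M + sup y ?S - y"
      using cSUP_upper[OF that bdd] cSUP_upper[OF that assms(2)]
      by (intro diff_right_mono add_mono sup_mono) simp_all
    finally show ?thesis .
  qed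
  then have "?S \<le> ?M + sup y ?S - y"
    using assms(1) by (intro cSUP_least)
  then have "y + ?S \<le> ?M + sup y ?S"
    by (simp add: le_diff_eq add.commute)
  then show "inf y ?S \<le> ?M"
    by (metis add_eq_inf_sup add.commute add_le_cancel_right)
  show "?M \<le> inf y ?S"
    using assms by (intro cSUP_least inf_mono order_refl cSUP_upper)
qed

lemma bdd_above_image_add:
  fixes f :: "'b \<Rightarrow> 'a::ordered_ab_semigroup_add"
  assumes "bdd_above (f ` I)"
  shows "bdd_above ((\<lambda>i. f i + c) ` I)"
  using assms by (auto simp: bdd_above_def intro: add_right_mono)

lemma cSUP_add:
  fixes f :: "'b \<Rightarrow> 'a::{conditionally_complete_lattice, lattice_ab_group_add}"
  assumes "I \<noteq> {}" "bdd_above (f ` I)"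
  shows "(SUP i\<in>I. f i) + c = (SUP i\<in>I. f i + c)"
proof (rule antisym)
  have bdd: "bdd_above ((\<lambda>i. f i + c) ` I)"
    using assms(2) by (rule bdd_above_image_add)
  have "(SUP i\<in>I. f i) \<le> (SUP i\<in>I. f i + c) - c"
    using assms(1) by (intro cSUP_least) (auto simp: le_diff_eq intro: cSUP_upper[OF _ bdd])
  then show "(SUP i\<in>I. f i) + c \<le> (SUP i\<in>I. f i + c)"
    by (simp add: le_diff_eq)
  show "(SUP i\<in>I. f i + c) \<le> (SUP i\<in>I. f i) + c"
    using assms by (intro cSUP_least add_right_mono cSUP_upper)
qed

lemma inf_cSUP_cSUP_le:
  fixes f g :: "'b \<Rightarrow> 'a::{conditionally_complete_lattice, lattice_ab_group_add}"
  assumes "I \<noteq> {}" "bdd_above (f ` I)" "J \<noteq> {}" "bdd_above (g ` J)"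
    and "\<And>i j. i \<in> I \<Longrightarrow> j \<in> J \<Longrightarrow> inf (f i) (g j) \<le> M"
  shows "inf (SUP i\<in>I. f i) (SUP j\<in>J. g j) \<le> M"
proof -
  have "inf (f i) (SUP j\<in>J. g j) \<le> M" if "i \<in> I" for i
    using assms(3-5) that by (simp add: inf_cSUP cSUP_least)
  then have "inf (SUP j\<in>J. g j) (f i) \<le> M" if "i \<in> I" for i
    using that by (simp add: inf_commute)
  then show ?thesis
    using assms(1,2) by (subst inf_commute) (simp add: inf_cSUP cSUP_least)
qed

lemma inf_cSUP_mono:
  fixes F G :: "'i::semilattice_sup \<Rightarrow> 'a::{conditionally_complete_lattice, lattice_ab_group_add}"
  assumes "mono F" "mono G" "bdd_above (range F)" "bdd_above (range G)"
  shows "inf (SUP s. F s) (SUP t. G t) = (SUP s. inf (F s) (G s))"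
proof (rule antisym)
  have bdd: "bdd_above (range (\<lambda>s. inf (F s) (G s)))"
    using assms(3) by (auto simp: bdd_above_def intro: le_infI1)
  have "inf (F s) (G t) \<le> inf (F (sup s t)) (G (sup s t))" for s t
    using assms(1,2) by (intro inf_mono) (simp_all add: monoD)
  then have "inf (F s) (G t) \<le> (SUP s. inf (F s) (G s))" for s t
    by (rule order_trans) (rule cSUP_upper[OF UNIV_I bdd])
  then show "inf (SUP s. F s) (SUP t. G t) \<le> (SUP s. inf (F s) (G s))"
    using assms(3,4) by (intro inf_cSUP_cSUP_le) simp_all
  show "(SUP s. inf (F s) (G s)) \<le> inf (SUP s. F s) (SUP t. G t)"
    using assms(3,4) by (intro cSUP_least inf_mono cSUP_upper) simp_all
qed

lemma updir_image2:
  assumes "updir A" "updir B"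
    and mono: "\<And>a a' b b'. a \<le> a' \<Longrightarrow> b \<le> b' \<Longrightarrow> f a b \<le> f a' b'"
  shows "updir {f a b |a b. a \<in> A \<and> b \<in> B}"
  unfolding updir_def
proof (intro conjI ballI)
  show "{f a b |a b. a \<in> A \<and> b \<in> B} \<noteq> {}"
    using assms(1,2) by (auto simp: updir_def)
  fix p q assume "p \<in> {f a b |a b. a \<in> A \<and> b \<in> B}" "q \<in> {f a b |a b. a \<in> A \<and> b \<in> B}"
  then obtain a b a' b' where "p = f a b" "q = f a' b'" "a \<in> A" "b \<in> B" "a' \<in> A" "b' \<in> B"
    by blast
  moreover obtain a'' b'' where "a'' \<in> A" "a \<le> a''" "a' \<le> a''" "b'' \<in> B" "b \<le> b''" "b' \<le> b''"
    using assms(1,2) calculation unfolding updir_def by meson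
  ultimately show "\<exists>r\<in>{f a b |a b. a \<in> A \<and> b \<in> B}. p \<le> r \<and> q \<le> r"
    by (blast intro: mono)
qed

definition sc_trunc :: "'a::dc_riesz_space supc \<Rightarrow> 'a \<Rightarrow> 'a" where
  "sc_trunc c u = (SUP a\<in>sc_rep c. inf u a)"

lemma
  shows updir_sc_rep: "updir (sc_rep c)"
    and Rep_supc_sc_rep: "Rep_supc c = {B. updir B \<and> sc_rel (sc_rep c) B}"
proof -
  obtain A where A: "updir A" "Rep_supc c = {B. updir B \<and> sc_rel A B}"
    using Rep_supc[of c] by blast
  then have "A \<in> Rep_supc c"
    by (simp add: sc_rel_def)
  then have "sc_rep c \<in> Rep_supc c"
    unfolding sc_rep_def by (rule someI)
  then have rep: "updir (sc_rep c)" "sc_rel A (sc_rep c)"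
    using A by auto
  then have "sc_rel A B \<longleftrightarrow> sc_rel (sc_rep c) B" for B
    by (simp add: sc_rel_def)
  then show "updir (sc_rep c)" "Rep_supc c = {B. updir B \<and> sc_rel (sc_rep c) B}"
    using A rep by auto
qed

lemma sc_rep_nonempty: "sc_rep c \<noteq> {}"
  using updir_sc_rep[of c] by (simp add: updir_def)

lemma sc_trunc_sc_class:
  assumes "updir A"
  shows "sc_trunc (sc_class A) u = (SUP a\<in>A. inf u a)"
proof -
  have "Rep_supc (sc_class A) = {B. updir B \<and> sc_rel A B}"
    unfolding sc_class_def using assms by (intro Abs_supc_inverse) blast
  moreover have "sc_rep (sc_class A) \<in> Rep_supc (sc_class A)"
    using updir_sc_rep by (simp add: Rep_supc_sc_rep sc_rel_def)
  ultimately have "sc_rel A (sc_rep (sc_class A))"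
    by simp
  then show ?thesis
    unfolding sc_trunc_def sc_rel_def by metis
qed

lemma supc_eqI:
  assumes "\<And>u. sc_trunc c u = sc_trunc d u"
  shows "c = d"
proof -
  have "sc_rel (sc_rep c) = sc_rel (sc_rep d)"
    using assms unfolding sc_rel_def sc_trunc_def by metis
  then show ?thesis
    by (metis Rep_supc_inject Rep_supc_sc_rep)
qed

lemma less_eq_supc_iff: "c \<le> d \<longleftrightarrow> (\<forall>u. sc_trunc c u \<le> sc_trunc d u)"
  by (simp add: less_eq_supc_def sc_trunc_def)

instance supc :: (dc_riesz_space) order
proof
  fix c d e :: "'a supc"
  show "c < d \<longleftrightarrow> c \<le> d \<and> \<not> d \<le> c"
    by (simp add: less_supc_def)
  show "c \<le> c"
    by (simp add: less_eq_supc_iff)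
  show "c \<le> d \<Longrightarrow> d \<le> e \<Longrightarrow> c \<le> e"
    by (auto simp: less_eq_supc_iff intro: order_trans)
  show "c \<le> d \<Longrightarrow> d \<le> c \<Longrightarrow> c = d"
    by (auto simp: less_eq_supc_iff intro: supc_eqI antisym)
qed

lemma sc_trunc_upper: "a \<in> sc_rep c \<Longrightarrow> inf u a \<le> sc_trunc c u"
  unfolding sc_trunc_def by (rule cSUP_upper[OF _ bdd_above_inf_image])

lemma mono_sc_trunc: "mono (sc_trunc c)"
proof (rule monoI)
  fix u u' :: 'a assume "u \<le> u'"
  then show "sc_trunc c u \<le> sc_trunc c u'"
    unfolding sc_trunc_def
    by (intro cSUP_mono[OF sc_rep_nonempty bdd_above_inf_image]) (meson inf_mono order_refl)
qed

lemma le_sc_trunc_self: "a \<in> sc_rep c \<Longrightarrow> a \<le> sc_trunc c a"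
  using sc_trunc_upper[of a c a] by simp

lemma sc_trunc_meet_class:
  "sc_trunc (sc_class {inf a b |a b. a \<in> sc_rep c \<and> b \<in> sc_rep d}) u
     = inf (sc_trunc c u) (sc_trunc d u)"
  (is "sc_trunc (sc_class ?S) u = _")
proof -
  have S: "updir ?S"
    by (rule updir_image2[OF updir_sc_rep updir_sc_rep inf_mono])
  have "(SUP z\<in>?S. inf u z) = inf (sc_trunc c u) (sc_trunc d u)"
  proof (rule antisym)
    show "(SUP z\<in>?S. inf u z) \<le> inf (sc_trunc c u) (sc_trunc d u)"
    proof (rule cSUP_least)
      show "?S \<noteq> {}"
        using S by (simp add: updir_def)
      fix z assume "z \<in> ?S"
      then obtain a b where z: "z = inf a b" "a \<in> sc_rep c" "b \<in> sc_rep d"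
        by blast
      have "inf u z \<le> inf u a" "inf u z \<le> inf u b"
        by (simp_all add: z(1) le_infI2)
      then show "inf u z \<le> inf (sc_trunc c u) (sc_trunc d u)"
        using sc_trunc_upper[OF z(2)] sc_trunc_upper[OF z(3)] by (blast intro: le_infI order_trans)
    qed
    have "inf (inf u a) (inf u b) \<le> (SUP z\<in>?S. inf u z)" if "a \<in> sc_rep c" "b \<in> sc_rep d" for a b
      using that by (intro cSUP_upper2[OF bdd_above_inf_image, where x="inf a b"]) (auto simp: inf_aci)
    then show "inf (sc_trunc c u) (sc_trunc d u) \<le> (SUP z\<in>?S. inf u z)"
      unfolding sc_trunc_def
      by (intro inf_cSUP_cSUP_le sc_rep_nonempty bdd_above_inf_image)
  qed
  then show ?thesis
    using S by (simp add: sc_trunc_sc_class)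
qed

lemma inf_supc_eq: "inf c d = sc_class {inf a b |a b. a \<in> sc_rep c \<and> b \<in> sc_rep d}"
  (is "_ = ?E")
proof -
  have glb: "e \<le> ?E \<longleftrightarrow> e \<le> c \<and> e \<le> d" for e
    by (auto simp: less_eq_supc_iff sc_trunc_meet_class)
  show ?thesis
    unfolding inf_supc_def
  proof (rule the_equality)
    show "?E \<le> c \<and> ?E \<le> d \<and> (\<forall>e. e \<le> c \<and> e \<le> d \<longrightarrow> e \<le> ?E)"
      using glb by blast
    show "e = ?E" if "e \<le> c \<and> e \<le> d \<and> (\<forall>f. f \<le> c \<and> f \<le> d \<longrightarrow> f \<le> e)" for e
      using that glb[of e] glb[of ?E] by (blast intro: antisym)
  qed
qed

lemma sc_trunc_inf: "sc_trunc (inf c d) u = inf (sc_trunc c u) (sc_trunc d u)"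
  by (simp add: inf_supc_eq sc_trunc_meet_class)

instance supc :: (dc_riesz_space) semilattice_inf
  by standard (simp_all add: less_eq_supc_iff sc_trunc_inf le_infI1 le_infI2)

lemma sc_trunc_plus: "sc_trunc (c + d) u = (SUP s. inf u (sc_trunc c s + sc_trunc d s))"
proof -
  let ?S = "{a + b |a b. a \<in> sc_rep c \<and> b \<in> sc_rep d}"
  let ?T = "SUP z\<in>?S. inf u z"
  let ?R = "SUP s. inf u (sc_trunc c s + sc_trunc d s)"
  have S: "updir ?S"
    by (rule updir_image2[OF updir_sc_rep updir_sc_rep add_mono])
  have "?T \<le> ?R"
  proof (rule cSUP_least)
    show "?S \<noteq> {}"
      using S by (simp add: updir_def)
    fix z assume "z \<in> ?S"
    then obtain a b where z: "z = a + b" "a \<in> sc_rep c" "b \<in> sc_rep d"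
      by blast
    have "a \<le> sc_trunc c (sup a b)" "b \<le> sc_trunc d (sup a b)"
      using le_sc_trunc_self[OF z(2)] le_sc_trunc_self[OF z(3)] mono_sc_trunc
      by (meson monoD sup_ge1 sup_ge2 order_trans)+
    then have "inf u z \<le> inf u (sc_trunc c (sup a b) + sc_trunc d (sup a b))"
      unfolding z(1) by (intro inf_mono order_refl add_mono)
    then show "inf u z \<le> ?R"
      by (rule cSUP_upper2[OF bdd_above_inf_image UNIV_I])
  qed
  moreover have "inf u (sc_trunc c s + sc_trunc d s) \<le> ?T" for s
  proof -
    have "inf u (inf s b + inf s a) \<le> ?T" if "a \<in> sc_rep c" "b \<in> sc_rep d" for a b
    proof -
      have "inf u (inf s b + inf s a) \<le> inf u (a + b)"
        by (subst add.commute) (intro inf_mono order_refl add_mono inf_le2)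
      then show ?thesis
        using that by (intro cSUP_upper2[OF bdd_above_inf_image, where x="a + b"]) blast+
    qed
    then have "inf u (inf s a + sc_trunc d s) \<le> ?T" if "a \<in> sc_rep c" for a
      using that unfolding sc_trunc_def[of d]
      by (simp add: add.commute[of "inf s a"] cSUP_add inf_cSUP sc_rep_nonempty
          bdd_above_inf_image bdd_above_image_add cSUP_least)
    then show ?thesis
      unfolding sc_trunc_def[of c]
      by (simp add: cSUP_add inf_cSUP sc_rep_nonempty bdd_above_inf_image bdd_above_image_add
          cSUP_least)
  qed
  then have "?R \<le> ?T"
    by (intro cSUP_least) simp_all
  ultimately show ?thesis
    using S by (simp add: plus_supc_def sc_trunc_sc_class)
qed

lemma supc_inf_add_add_eq:
  fixes x y v w :: "'a::dc_riesz_space supc"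
  assumes "inf x y = inf v w"
  shows "inf (x + v) (y + w) = inf x w + inf y v"
proof (rule supc_eqI)
  fix u
  let ?t = sc_trunc
  have mono: "mono (\<lambda>s. inf u (?t c s + ?t d s))" for c d :: "'a supc"
    by (intro monoI inf_mono order_refl add_mono) (simp_all add: monoD[OF mono_sc_trunc])
  have bdd: "bdd_above (range (\<lambda>s. inf u (?t c s + ?t d s)))" for c d :: "'a supc"
    by (rule bdd_above_inf_image)
  have "inf (?t x s) (?t y s) = inf (?t v s) (?t w s)" for s
    using assms by (metis sc_trunc_inf)
  note pointwise = inf_add_add_eq[OF this]
  have "?t (inf (x + v) (y + w)) u
      = inf (SUP s. inf u (?t x s + ?t v s)) (SUP s. inf u (?t y s + ?t w s))"
    by (simp add: sc_trunc_inf sc_trunc_plus)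
  also have "\<dots> = (SUP s. inf (inf u (?t x s + ?t v s)) (inf u (?t y s + ?t w s)))"
    by (rule inf_cSUP_mono[OF mono mono bdd bdd])
  also have "\<dots> = (SUP s. inf u (inf (?t x s) (?t w s) + inf (?t y s) (?t v s)))"
    by (simp add: pointwise inf_aci)
  also have "\<dots> = ?t (inf x w + inf y v) u"
    by (simp add: sc_trunc_inf sc_trunc_plus)
  finally show "?t (inf (x + v) (y + w)) u = ?t (inf x w + inf y v) u" .
qed

theorem mainTheorem15:
  fixes x y v w :: "'a::dc_riesz_space supc"
  assumes "0 \<le> x" and "0 \<le> y" and "0 \<le> v" and "0 \<le> w"
    and "inf x y = 0" and "inf v w = 0"
  shows "inf (x + v) (y + w) = inf x w + inf y v \<and> inf (inf x w) (inf y v) = 0"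
proof
  show "inf (x + v) (y + w) = inf x w + inf y v"
    using assms(5,6) by (simp add: supc_inf_add_add_eq)
  have "inf (inf x w) (inf y v) = inf (inf x y) (inf v w)"
    by (simp add: inf_aci)
  then show "inf (inf x w) (inf y v) = 0"
    using assms(5,6) by simp
qed

end
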